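(* Every closed quantifier $Q\subseteq 2^{\mathbb{N}^k}$ has a unique support, i.e. there is a unique $\subseteq$-minimal set $S\subseteq\mathbb{N}^k$ supporting $Q$.
   Context: A quantifier of type $\langle k\rangle$ on $\mathbb{N}$ is a family $Q$ of subsets of $\mathbb{N}^k$, identified with a subset of $2^{\mathbb{N}^k}$ (product topology). A set $S\subseteq\mathbb{N}^k$ supports $Q$ if for all $A,B\subseteq\mathbb{N}^k$ with $A\cap S=B\cap S$ we have $A\in Q\iff B\in Q$. A support of $Q$ is a minimal (under inclusion) set supporting $Q$. *)

theory Defs
  imports "HOL-Analysis.Analysis"
begin

text \<open>Points of N^k are vectors of type nat^'k (with CARD('k) = k).
  A quantifier Q is a family of subsets of N^k; it is identified with the set of
  characteristic functions in the Cantor-type space (nat^'k => bool), which carries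
  the product topology (bool has the discrete topology).\<close>

definition supports :: "'a set set \<Rightarrow> 'a set \<Rightarrow> bool" where
  "supports Q S \<longleftrightarrow> (\<forall>A B. A \<inter> S = B \<inter> S \<longrightarrow> (A \<in> Q \<longleftrightarrow> B \<in> Q))"

definition is_support :: "'a set set \<Rightarrow> 'a set \<Rightarrow> bool" where
  "is_support Q S \<longleftrightarrow> supports Q S \<and> (\<forall>T. T \<subseteq> S \<and> supports Q T \<longrightarrow> T = S)"

definition char_fun :: "'a set \<Rightarrow> ('a \<Rightarrow> bool)" where
  "char_fun A = (\<lambda>x. x \<in> A)"

end

theory Submission
  imports Defs
begin

(*
  Supporting sets of a quantifier Q are closed under finite
  intersections (patch A into B outside one supporting set, then use the
  other).  Let S0 be the intersection of ALL supporting sets.  If S0 itself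
  supports Q, it is the least supporting set, hence the unique minimal one.
  For a closed Q this is the case: given A \<in> Q and B agreeing with A on S0,
  every finite window F of B is matched by a member of Q, namely A patched
  into B on a finite intersection S' of supporting sets avoiding F - S0;
  closedness of Q in the product topology of ('a \<Rightarrow> bool) then gives B \<in> Q.
*)

lemma supports_patch:
  assumes "supports Q S" "A \<in> Q"
  shows "(A \<inter> S) \<union> (B - S) \<in> Q"
proof -
  have "((A \<inter> S) \<union> (B - S)) \<inter> S = A \<inter> S" by auto
  then show ?thesis using assms unfolding supports_def by metis
qed

lemma supports_Int:
  assumes S: "supports Q S" and T: "supports Q T"
  shows "supports Q (S \<inter> T)"
  unfolding supports_def
proof (intro allI impI)
  fix A B assume agree: "A \<inter> (S \<inter> T) = B \<inter> (S \<inter> T)"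
  define C where "C = (A \<inter> S) \<union> (B - S)"
  have "A \<in> Q \<longleftrightarrow> C \<in> Q"
  proof -
    have "C \<inter> S = A \<inter> S" unfolding C_def by auto
    then show ?thesis using S unfolding supports_def by metis
  qed
  moreover have "C \<in> Q \<longleftrightarrow> B \<in> Q"
  proof -
    have "C \<inter> T = B \<inter> T" using agree unfolding C_def by blast
    then show ?thesis using T unfolding supports_def by metis
  qed
  ultimately show "A \<in> Q \<longleftrightarrow> B \<in> Q" by simp
qed

lemma supports_INT_finite:
  assumes "finite F" "\<And>x. x \<in> F \<Longrightarrow> supports Q (G x)"
  shows "supports Q (\<Inter>x\<in>F. G x)"
  using assms
proof (induction F rule: finite_induct)
  case empty
  show ?case by (simp add: supports_def)
next
  case (insert x F)
  then show ?case by (simp add: supports_Int)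
qed

lemma unique_support_if_Inter_supports:
  assumes "supports Q (\<Inter>{S. supports Q S})"
  shows "\<exists>!S. is_support Q S"
proof -
  let ?S0 = "\<Inter>{S. supports Q S}"
  have least: "?S0 \<subseteq> T" if "supports Q T" for T using that by auto
  have "is_support Q ?S0" using assms least unfolding is_support_def by auto
  moreover have "S = ?S0" if "is_support Q S" for S
    using that assms least unfolding is_support_def by blast
  ultimately show ?thesis by blast
qed

text \<open>Membership in a closed family: B belongs to Q as soon as every finite
  window of B is realised by some member of Q (B lies in the closure).\<close>
lemma closed_family_mem:
  fixes Q :: "'a set set"
  assumes closed: "closed (char_fun ` Q)"
    and window: "\<And>F. finite F \<Longrightarrow> \<exists>C\<in>Q. C \<inter> F = B \<inter> F"
  shows "B \<in> Q"
proof (rule ccontr)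
  assume "B \<notin> Q"
  then have outside: "char_fun B \<in> - (char_fun ` Q)"
    unfolding char_fun_def by (metis (no_types) ComplI image_iff Collect_mem_eq)
  have "open (- (char_fun ` Q))" using closed by (rule open_Compl)
  then have "openin (product_topology (\<lambda>i. euclidean) UNIV) (- (char_fun ` Q))"
    unfolding open_fun_def by simp
  from product_topology_open_contains_basis[OF this outside]
  obtain X where X: "char_fun B \<in> (\<Pi>\<^sub>E i\<in>UNIV. X i)"
      "finite {i. X i \<noteq> topspace euclidean}"
      "(\<Pi>\<^sub>E i\<in>UNIV. X i) \<subseteq> - (char_fun ` Q)" by auto
  define F where "F = {i. X i \<noteq> UNIV}"
  have "finite F" using X(2) unfolding F_def by simp
  then obtain C where C: "C \<in> Q" "C \<inter> F = B \<inter> F" using window by blast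
  have "char_fun C i \<in> X i" for i
  proof (cases "i \<in> F")
    case True
    then have "char_fun C i = char_fun B i" using C(2) unfolding char_fun_def by blast
    then show ?thesis using X(1) by auto
  next
    case False
    then show ?thesis unfolding F_def by auto
  qed
  then have "char_fun C \<in> (\<Pi>\<^sub>E i\<in>UNIV. X i)" by auto
  with X(3) C(1) show False by auto
qed

lemma closed_Inter_supports:
  fixes Q :: "'a set set"
  assumes closed: "closed (char_fun ` Q)"
  shows "supports Q (\<Inter>{S. supports Q S})"
proof -
  define S0 where "S0 = \<Inter>{S. supports Q S}"
  have "B \<in> Q" if A: "A \<in> Q" and agree: "A \<inter> S0 = B \<inter> S0" for A B
  proof (rule closed_family_mem[OF closed])
    fix F :: "'a set" assume "finite F"
    have "\<exists>S. supports Q S \<and> x \<notin> S" if "x \<in> F - S0" for x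
      using that unfolding S0_def by blast
    then obtain G where G: "\<And>x. x \<in> F - S0 \<Longrightarrow> supports Q (G x) \<and> x \<notin> G x" by metis
    define S' where "S' = (\<Inter>x\<in>F - S0. G x)"
    have "supports Q S'"
      unfolding S'_def using \<open>finite F\<close> G by (intro supports_INT_finite) auto
    then have "(A \<inter> S') \<union> (B - S') \<in> Q" using A by (rule supports_patch)
    moreover have "S' \<inter> F \<subseteq> S0" using G unfolding S'_def by blast
    then have "((A \<inter> S') \<union> (B - S')) \<inter> F = B \<inter> F" using agree by blast
    ultimately show "\<exists>C\<in>Q. C \<inter> F = B \<inter> F" by blast
  qed
  then have "supports Q S0" unfolding supports_def by blast
  then show ?thesis unfolding S0_def .
qed

theorem lemma16:
  fixes Q :: "(nat ^ 'k) set set"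
  assumes "closed (char_fun ` Q)"
  shows "\<exists>!S. is_support Q S"
  using unique_support_if_Inter_supports[OF closed_Inter_supports[OF assms]] .

end
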